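(* Let $q$ be a prime power, $\gcd(n,q)=1$, and let $C$ be a cyclic code of length $n$ over $\mathbb{F}_{q^2}$ with parameters $[n,k,d]_{q^2}$. Then there exists a QUENTA code with parameters $$[[\,n,\;k-|Z(C^{\perp_h})\cap Z(C)|,\;d;\;n-k-|Z(C^{\perp_h})\cap Z(C)|\,]]_q .$$
   Context: For $x,y\in\mathbb{F}_{q^2}^n$ the Hermitian inner product is $\langle x,y\rangle_h=\sum_{i} x_i y_i^q$, and $C^{\perp_h}=\{x: \langle x,c\rangle_h=0\ \forall c\in C\}$ is the Hermitian dual. For a cyclic code $C$ of length $n$ over $\mathbb{F}_{q^2}$ (with $\gcd(n,q)=1$) and a fixed primitive $n$-th root of unity $\alpha$ in an extension of $\mathbb{F}_{q^2}$, the defining set is $Z(C)=\{i\in\mathbb{Z}_n: c(\alpha^i)=0\ \forall c\in C\}$; $C^{\perp_h}$ is again cyclic and $Z(C^{\perp_h})=\mathbb{Z}_n\setminus(-q\,Z(C))$. A QUENTA code (entanglement-assisted quantum error-correcting code) with parameters $[[n,k,d;c]]_q$ is a $q$-ary entanglement-assisted quantum stabilizer code that encodes $k$ logical qudits into $n$ physical qudits using $c$ pairs of maximally entangled qudits pre-shared between sender and receiver, and has minimum distance $d$. *)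

theory Defs
  imports "HOL-Computational_Algebra.Primes"
begin

definition vecs :: "nat \<Rightarrow> (nat \<Rightarrow> 'a::zero) set" where
  "vecs n = {x. \<forall>i\<ge>n. x i = 0}"

definition hweight :: "nat \<Rightarrow> (nat \<Rightarrow> 'a::zero) \<Rightarrow> nat" where
  "hweight n x = card {i. i < n \<and> x i \<noteq> 0}"

definition linear_code :: "nat \<Rightarrow> (nat \<Rightarrow> 'a::field) set \<Rightarrow> bool" where
  "linear_code n C \<longleftrightarrow> C \<subseteq> vecs n \<and> (\<lambda>_. 0) \<in> C \<and>
     (\<forall>x\<in>C. \<forall>y\<in>C. (\<lambda>i. x i + y i) \<in> C) \<and>
     (\<forall>a. \<forall>x\<in>C. (\<lambda>i. a * x i) \<in> C)"

definition cshift :: "nat \<Rightarrow> (nat \<Rightarrow> 'a::zero) \<Rightarrow> nat \<Rightarrow> 'a" where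
  "cshift n x = (\<lambda>i. if i < n then x ((i + n - 1) mod n) else 0)"

definition cyclic_code :: "nat \<Rightarrow> (nat \<Rightarrow> 'a::field) set \<Rightarrow> bool" where
  "cyclic_code n C \<longleftrightarrow> linear_code n C \<and> (\<forall>x\<in>C. cshift n x \<in> C)"

text \<open>Parameters [n,k,d] over the field 'a: dimension k (i.e. |C| = |F|^k) and
  minimum distance d (minimum Hamming weight of a nonzero codeword).\<close>

definition code_params :: "nat \<Rightarrow> nat \<Rightarrow> nat \<Rightarrow> (nat \<Rightarrow> 'a::{field,finite}) set \<Rightarrow> bool" where
  "code_params n k d C \<longleftrightarrow> linear_code n C \<and> card C = card (UNIV :: 'a set) ^ k \<and>
     (\<exists>x\<in>C. x \<noteq> (\<lambda>_. 0) \<and> hweight n x = d) \<and>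
     (\<forall>x\<in>C. x \<noteq> (\<lambda>_. 0) \<longrightarrow> d \<le> hweight n x)"

definition herm :: "nat \<Rightarrow> nat \<Rightarrow> (nat \<Rightarrow> 'a::field) \<Rightarrow> (nat \<Rightarrow> 'a) \<Rightarrow> 'a" where
  "herm q n x y = (\<Sum>i<n. x i * y i ^ q)"

definition herm_dual :: "nat \<Rightarrow> nat \<Rightarrow> (nat \<Rightarrow> 'a::field) set \<Rightarrow> (nat \<Rightarrow> 'a) set" where
  "herm_dual q n C = {x \<in> vecs n. \<forall>c\<in>C. herm q n x c = 0}"

text \<open>Defining set w.r.t. an embedding emb of 'a into an extension field 'b and
  a primitive n-th root of unity alpha in 'b: Z(C) = {i in Z_n. c(alpha^i) = 0 for all c in C}.\<close>

definition defining_set :: "('a::field \<Rightarrow> 'b::field) \<Rightarrow> 'b \<Rightarrow> nat \<Rightarrow> (nat \<Rightarrow> 'a) set \<Rightarrow> nat set" where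
  "defining_set emb \<alpha> n C =
     {i. i < n \<and> (\<forall>c\<in>C. (\<Sum>j<n. emb (c j) * (\<alpha> ^ i) ^ j) = 0)}"

definition field_embedding :: "('a::field \<Rightarrow> 'b::field) \<Rightarrow> bool" where
  "field_embedding emb \<longleftrightarrow> emb 1 = 1 \<and> (\<forall>x y. emb (x + y) = emb x + emb y) \<and>
     (\<forall>x y. emb (x * y) = emb x * emb y)"

definition primitive_root_of_unity :: "nat \<Rightarrow> 'b::field \<Rightarrow> bool" where
  "primitive_root_of_unity n \<alpha> \<longleftrightarrow> \<alpha> ^ n = 1 \<and> (\<forall>m. 0 < m \<and> m < n \<longrightarrow> \<alpha> ^ m \<noteq> 1)"

definition prime_power :: "nat \<Rightarrow> bool" where
  "prime_power q \<longleftrightarrow> (\<exists>p m. prime p \<and> 0 < m \<and> q = p ^ m)"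

text \<open>Symplectic (stabilizer) description over the field K = F_q (a subfield of 'a,
  given as a set).  A Pauli operator on n qudits, up to phase, is a vector (a|b) in F_q^{2n}.\<close>

definition svecs :: "'a::field set \<Rightarrow> nat \<Rightarrow> ((nat \<Rightarrow> 'a) \<times> (nat \<Rightarrow> 'a)) set" where
  "svecs K n = {(a, b). (\<forall>i. a i \<in> K \<and> b i \<in> K) \<and> (\<forall>i\<ge>n. a i = 0 \<and> b i = 0)}"

definition symp :: "nat \<Rightarrow> (nat \<Rightarrow> 'a::field) \<times> (nat \<Rightarrow> 'a) \<Rightarrow> (nat \<Rightarrow> 'a) \<times> (nat \<Rightarrow> 'a) \<Rightarrow> 'a" where
  "symp n v w = (\<Sum>i<n. fst v i * snd w i - fst w i * snd v i)"

definition symp_dual :: "'a::field set \<Rightarrow> nat \<Rightarrow> ((nat \<Rightarrow> 'a) \<times> (nat \<Rightarrow> 'a)) set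
    \<Rightarrow> ((nat \<Rightarrow> 'a) \<times> (nat \<Rightarrow> 'a)) set" where
  "symp_dual K n S = {v \<in> svecs K n. \<forall>s\<in>S. symp n v s = 0}"

definition sweight :: "nat \<Rightarrow> (nat \<Rightarrow> 'a::zero) \<times> (nat \<Rightarrow> 'a) \<Rightarrow> nat" where
  "sweight n v = card {i. i < n \<and> (fst v i \<noteq> 0 \<or> snd v i \<noteq> 0)}"

definition ssubspace :: "'a::field set \<Rightarrow> nat \<Rightarrow> ((nat \<Rightarrow> 'a) \<times> (nat \<Rightarrow> 'a)) set \<Rightarrow> bool" where
  "ssubspace K n S \<longleftrightarrow> S \<subseteq> svecs K n \<and> ((\<lambda>_. 0), (\<lambda>_. 0)) \<in> S \<and>
     (\<forall>v\<in>S. \<forall>w\<in>S. ((\<lambda>i. fst v i + fst w i), (\<lambda>i. snd v i + snd w i)) \<in> S) \<and>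
     (\<forall>a\<in>K. \<forall>v\<in>S. ((\<lambda>i. a * fst v i), (\<lambda>i. a * snd v i)) \<in> S)"

text \<open>An [[n,k,d;c]] QUENTA code over K: a (generally non-abelian) stabilizer group, i.e.
  a K-subspace S of K^{2n} with dim S = n-k+c whose isotropic part S \<inter> S^\<perp>
  has dimension n-k-c (so S has c symplectic pairs, c ebits, encoding k qudits);
  dimensions are expressed via cardinalities |S| = |K|^dim.  The minimum distance d is
  taken as the minimum symplectic weight of a nonzero element of the symplectic dual
  S^\<perp> (the set of undetectable errors).\<close>

definition quenta_code :: "'a::field set \<Rightarrow> nat \<Rightarrow> nat \<Rightarrow> nat \<Rightarrow> nat \<Rightarrow> bool" where
  "quenta_code K n k d c \<longleftrightarrow> k + c \<le> n \<and>
     (\<exists>S. ssubspace K n S \<and>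
        card S = card K ^ (n - k + c) \<and>
        card (S \<inter> symp_dual K n S) = card K ^ (n - k - c) \<and>
        (\<exists>v\<in>symp_dual K n S. v \<noteq> ((\<lambda>_. 0), (\<lambda>_. 0)) \<and> sweight n v = d) \<and>
        (\<forall>v\<in>symp_dual K n S. v \<noteq> ((\<lambda>_. 0), (\<lambda>_. 0)) \<longrightarrow> d \<le> sweight n v))"

end

theory Submission
  imports Defs "HOL-Computational_Algebra.Polynomial"
begin

text \<open>Choose \<open>\<theta> \<noteq> 0\<close> with \<open>\<theta>\<^sup>q = -\<theta>\<close> and \<open>w\<close> outside \<open>GF(q)\<close>. Then
  \<open>\<theta> (u v\<^sup>q - u\<^sup>q v)\<close> is a \<open>GF(q)\<close>-valued alternating form on \<open>GF(q\<^sup>2) \<cong> GF(q)\<^sup>2\<close>, and taking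
  coordinates in a symplectic basis embeds \<open>GF(q\<^sup>2)\<^sup>n\<close> into \<open>GF(q)\<^bsup>2n\<^esub>\<close> so that the
  symplectic product of the images of \<open>x\<close> and \<open>y\<close> is \<open>\<theta> (h - h\<^sup>q)\<close>, where \<open>h\<close> is their
  Hermitian product. Hence the image \<open>S\<close> of \<open>D = C\<^sup>\<bottom>\<^sup>h\<close> has as symplectic dual the image
  of \<open>D\<^sup>\<bottom>\<^sup>h = C\<close>, whose minimum weight is \<open>d\<close>, and \<open>S \<inter> S\<^sup>\<bottom>\<close> is the image of \<open>C \<inter> D\<close>.

  To count \<open>C \<inter> D\<close>: the cyclic code \<open>C + D\<close> has defining set \<open>Z(C) \<inter> Z(D)\<close>, and a
  cyclic code has dimension \<open>n\<close> minus the size of its defining set (the degree of its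
  generator polynomial). With \<open>|C| |D| = |C \<inter> D| |C + D|\<close> and \<open>|C| |D| = q\<^bsup>2n\<^esub>\<close> this gives
  \<open>dim (C \<inter> D) = |Z(C\<^sup>\<bottom>\<^sup>h) \<inter> Z(C)|\<close>, while \<open>dim S = 2 (n - k)\<close>.\<close>

lemma vecs_Suc: "vecs (Suc n) = (\<lambda>(x, a). x(n := a)) ` (vecs n \<times> (UNIV :: 'a::zero set))"
proof (intro equalityI subsetI)
  fix y :: "nat \<Rightarrow> 'a" assume "y \<in> vecs (Suc n)"
  hence "y(n := 0) \<in> vecs n" "y = (y(n := 0))(n := y n)" by (auto simp: vecs_def)
  thus "y \<in> (\<lambda>(x, a). x(n := a)) ` (vecs n \<times> UNIV)"
    by (intro image_eqI[of _ _ "(y(n := 0), y n)"]) auto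
qed (auto simp: vecs_def)

lemma inj_on_fun_upd_vecs: "inj_on (\<lambda>(x, a). x(n := a)) (vecs n \<times> UNIV)"
proof (rule inj_onI, clarsimp)
  fix x y :: "nat \<Rightarrow> 'a" and a b
  assume x: "x \<in> vecs n" and y: "y \<in> vecs n" and eq: "x(n := a) = y(n := b)"
  have "x i = y i" for i
    using x y fun_cong[OF eq, of i] by (cases "i = n") (auto simp: vecs_def)
  thus "x = y \<and> a = b" using fun_cong[OF eq, of n] by auto
qed

lemma finite_card_vecs:
  "finite (vecs n :: (nat \<Rightarrow> 'a::{zero,finite}) set) \<and> card (vecs n :: (nat \<Rightarrow> 'a) set) = card (UNIV :: 'a set) ^ n"
proof (induction n)
  case 0
  have "vecs 0 = {\<lambda>_. 0 :: 'a}" by (auto simp: vecs_def)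
  thus ?case by simp
next
  case (Suc n)
  thus ?case unfolding vecs_Suc
    by (simp add: card_image[OF inj_on_fun_upd_vecs] card_cartesian_product)
qed

lemma finite_vecs: "finite (vecs n :: (nat \<Rightarrow> 'a::{zero,finite}) set)"
  using finite_card_vecs by blast

lemma card_vecs: "card (vecs n :: (nat \<Rightarrow> 'a::{zero,finite}) set) = card (UNIV :: 'a set) ^ n"
  using finite_card_vecs by blast

lemma vecs_add: "a \<in> vecs n \<Longrightarrow> b \<in> vecs n \<Longrightarrow> (\<lambda>i. a i + b i :: 'a::monoid_add) \<in> vecs n"
  by (simp add: vecs_def)

lemma vecs_diff: "a \<in> vecs n \<Longrightarrow> b \<in> vecs n \<Longrightarrow> (\<lambda>i. a i - b i :: 'a::group_add) \<in> vecs n"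
  by (simp add: vecs_def)

lemma linear_code_subset_vecs: "linear_code n C \<Longrightarrow> C \<subseteq> vecs n"
  unfolding linear_code_def by blast

lemma linear_code_zero: "linear_code n C \<Longrightarrow> (\<lambda>_. 0) \<in> C"
  unfolding linear_code_def by blast

lemma linear_code_add: "linear_code n C \<Longrightarrow> a \<in> C \<Longrightarrow> b \<in> C \<Longrightarrow> (\<lambda>i. a i + b i) \<in> C"
  unfolding linear_code_def by blast

lemma linear_code_smult: "linear_code n C \<Longrightarrow> a \<in> C \<Longrightarrow> (\<lambda>i. s * a i) \<in> C"
  unfolding linear_code_def by blast

lemma linear_code_diff:
  assumes "linear_code n C" "a \<in> C" "b \<in> C"
  shows "(\<lambda>i. a i - b i) \<in> C"
  using linear_code_add[OF assms(1,2) linear_code_smult[OF assms(1,3), of "-1"]] by simp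

lemma linear_code_finite: "linear_code n (C :: (nat \<Rightarrow> 'a::{field,finite}) set) \<Longrightarrow> finite C"
  using finite_vecs linear_code_subset_vecs by (rule finite_subset[rotated])

lemma card_linear_code_le:
  "linear_code n (C :: (nat \<Rightarrow> 'a::{field,finite}) set) \<Longrightarrow> card C \<le> card (UNIV :: 'a set) ^ n"
  using card_mono[OF finite_vecs linear_code_subset_vecs] card_vecs by metis

lemma card_linear_code_pos: "linear_code n (C :: (nat \<Rightarrow> 'a::{field,finite}) set) \<Longrightarrow> 0 < card C"
  using linear_code_finite linear_code_zero card_gt_0_iff by blast

lemma cyclic_code_linear: "cyclic_code n C \<Longrightarrow> linear_code n C"
  unfolding cyclic_code_def by blast

lemma cyclic_code_cshift: "cyclic_code n C \<Longrightarrow> x \<in> C \<Longrightarrow> cshift n x \<in> C"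
  unfolding cyclic_code_def by blast

lemma factors_eq_of_square: "(a::nat) \<le> c \<Longrightarrow> b \<le> c \<Longrightarrow> a * b = c * c \<Longrightarrow> a = c \<and> b = c"
  by (metis le_antisym le_zero_eq mult.commute mult_cancel1 mult_le_mono2)

lemma card_eq_card_fiber_mult:
  assumes "finite A" "\<And>w. w \<in> f ` A \<Longrightarrow> card {a\<in>A. f a = w} = m"
  shows "card A = m * card (f ` A)"
proof -
  have "card A = card (\<Union>w\<in>f ` A. {a\<in>A. f a = w})" by (rule arg_cong[where f = card]) auto
  also have "\<dots> = (\<Sum>w\<in>f ` A. card {a\<in>A. f a = w})"
    by (rule card_UN_disjoint) (use assms(1) in auto)
  also have "\<dots> = m * card (f ` A)" using assms(2) by simp
  finally show ?thesis .
qed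

lemma card_eq_card_kernel_mult:
  fixes f :: "(nat \<Rightarrow> 'v::ab_group_add) \<Rightarrow> 'w::ab_group_add"
  assumes fin: "finite A"
    and add: "\<And>a b. a \<in> A \<Longrightarrow> b \<in> A \<Longrightarrow> (\<lambda>i. a i + b i) \<in> A"
    and diff: "\<And>a b. a \<in> A \<Longrightarrow> b \<in> A \<Longrightarrow> (\<lambda>i. a i - b i) \<in> A"
    and f_diff: "\<And>a b. a \<in> A \<Longrightarrow> b \<in> A \<Longrightarrow> f (\<lambda>i. a i - b i) = f a - f b"
    and surj: "f ` A = UNIV"
  shows "card A = card {a\<in>A. f a = 0} * card (UNIV :: 'w set)"
proof -
  have "card {a\<in>A. f a = w} = card {a\<in>A. f a = 0}" if "w \<in> f ` A" for w
  proof -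
    obtain a0 where a0: "a0 \<in> A" "w = f a0" using \<open>w \<in> f ` A\<close> by blast
    let ?tr = "\<lambda>k i. k i + a0 i"
    have "{a\<in>A. f a = w} = ?tr ` {k\<in>A. f k = 0}"
    proof (intro equalityI subsetI)
      fix a assume "a \<in> {a\<in>A. f a = w}"
      thus "a \<in> ?tr ` {k\<in>A. f k = 0}"
        using diff[OF _ a0(1), of a] f_diff[OF _ a0(1), of a] a0(2)
        by (intro image_eqI[where x = "\<lambda>i. a i - a0 i"]) auto
    next
      fix a assume "a \<in> ?tr ` {k\<in>A. f k = 0}"
      then obtain k where k: "k \<in> A" "f k = 0" "a = ?tr k" by blast
      hence "a \<in> A" using add[OF k(1) a0(1)] by simp
      moreover have "f k = f a - f a0" using f_diff[OF \<open>a \<in> A\<close> a0(1)] k(3) by simp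
      ultimately show "a \<in> {a\<in>A. f a = w}" using k(2) a0(2) by simp
    qed
    moreover have "inj (?tr :: (nat \<Rightarrow> 'v) \<Rightarrow> _)" by (rule injI) (simp add: fun_eq_iff)
    ultimately show ?thesis by (simp add: card_image inj_on_subset)
  qed
  hence "card A = card {a\<in>A. f a = 0} * card (f ` A)" by (rule card_eq_card_fiber_mult[OF fin])
  thus ?thesis using surj by simp
qed

lemma herm_add_left: "herm q n (\<lambda>i. a i + b i) c = herm q n a c + herm q n b (c :: nat \<Rightarrow> 'a::field)"
  unfolding herm_def by (simp add: algebra_simps sum.distrib)

lemma herm_diff_left: "herm q n (\<lambda>i. a i - b i) c = herm q n a c - herm q n b (c :: nat \<Rightarrow> 'a::field)"
  unfolding herm_def by (simp add: algebra_simps sum_subtractf)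

lemma herm_smult_left: "herm q n (\<lambda>i. s * a i) c = s * herm q n a (c :: nat \<Rightarrow> 'a::field)"
  unfolding herm_def by (simp add: algebra_simps sum_distrib_left)

lemma herm_smult_right: "herm q n x (\<lambda>i. s * c i) = s ^ q * herm q n x (c :: nat \<Rightarrow> 'a::field)"
  unfolding herm_def by (simp add: power_mult_distrib algebra_simps sum_distrib_left)

lemma linear_code_herm_dual: "linear_code n (herm_dual q n (C :: (nat \<Rightarrow> 'a::field) set))"
  unfolding linear_code_def herm_dual_def
  by (auto simp: vecs_def herm_add_left herm_smult_left) (simp add: herm_def)

lemma herm_surj_left:
  assumes c: "(c :: nat \<Rightarrow> 'a::field) \<in> vecs n" "c \<noteq> (\<lambda>_. 0)"
  shows "(\<lambda>x. herm q n x c) ` vecs n = UNIV"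
proof -
  obtain j where j: "c j \<noteq> 0" using c(2) by auto
  hence "j < n" using c(1) by (rule_tac ccontr) (simp add: vecs_def)
  have "w \<in> (\<lambda>x. herm q n x c) ` vecs n" for w
  proof
    let ?x = "\<lambda>i. if i = j then w / c j ^ q else 0"
    show "?x \<in> vecs n" using \<open>j < n\<close> by (simp add: vecs_def)
    have "herm q n ?x c = (\<Sum>i<n. if i = j then w / c j ^ q * c j ^ q else 0)"
      unfolding herm_def by (intro sum.cong) auto
    thus "w = herm q n ?x c" using \<open>j < n\<close> j by simp
  qed
  thus ?thesis by blast
qed

lemma card_herm_orthogonal_vecs:
  assumes "(c :: nat \<Rightarrow> 'a::{field,finite}) \<in> vecs n" "c \<noteq> (\<lambda>_. 0)"
  shows "card {x\<in>vecs n. herm q n x c = 0} * card (UNIV :: 'a set) = card (UNIV :: 'a set) ^ n"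
  using card_eq_card_kernel_mult[OF finite_vecs _ _ _ herm_surj_left[OF assms]] card_vecs
  by (simp add: vecs_add vecs_diff herm_diff_left)

section \<open>The field \<open>GF(q\<^sup>2)\<close>\<close>

text \<open>The library version \<open>finite_field_power_card_eq_same\<close> requires the type class
  \<open>finite_field\<close>, which is not available for a type variable of sort \<open>{field, finite}\<close>.\<close>

lemma finite_field_power_card:
  fixes x :: "'a::{field,finite}"
  shows "x ^ card (UNIV :: 'a set) = x"
proof (cases "x = 0")
  case False
  let ?U = "UNIV - {0 :: 'a}"
  have "bij_betw (\<lambda>y. x * y) ?U ?U"
    by (rule bij_betw_byWitness[where f' = "\<lambda>y. y / x"]) (use False in auto)
  hence "(\<Prod>y\<in>?U. x * y) = (\<Prod>y\<in>?U. y)" by (rule prod.reindex_bij_betw)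
  hence "x ^ card ?U * (\<Prod>y\<in>?U. y) = 1 * (\<Prod>y\<in>?U. y)" by (simp add: prod.distrib)
  hence "x ^ card ?U = 1" by (subst (asm) mult_cancel_right) simp
  moreover have "card (UNIV :: 'a set) = Suc (card ?U)"
    using card_Suc_Diff1[of "UNIV :: 'a set" 0] by simp
  ultimately show ?thesis by (simp del: card_Diff_insert)
qed (simp add: finite_UNIV_card_ge_0)

locale hermitian_field =
  fixes q :: nat and ty :: "'a::{field,finite} itself"
  assumes prime_power: "prime_power q" and card_field: "card (UNIV :: 'a set) = q ^ 2"
begin

definition Fq :: "'a set" where "Fq = {x. x ^ q = x}"

lemma q_ge_2: "q \<ge> 2"
proof -
  obtain p m where "prime p" "0 < m" "q = p ^ m" using prime_power unfolding prime_power_def by blast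
  thus ?thesis using prime_ge_2_nat[of p] power_increasing[of 1 m p] by simp
qed

lemma q_power_of_CHAR: "prime CHAR('a) \<and> (\<exists>m. q = CHAR('a) ^ m)"
proof -
  obtain p m where p: "prime p" "q = p ^ m" using prime_power unfolding prime_power_def by blast
  have prime_char: "prime CHAR('a)"
    by (rule prime_CHAR_semidom[OF finite_imp_CHAR_pos]) simp
  have "(\<Sum>y\<in>UNIV. y) = (\<Sum>y\<in>(UNIV::'a set). y + 1)"
    by (rule sum.reindex_bij_witness[of _ "\<lambda>y. y + 1" "\<lambda>y. y - 1"]) auto
  hence "of_nat (card (UNIV :: 'a set)) = (0::'a)" by (simp add: sum.distrib)
  hence "CHAR('a) dvd card (UNIV :: 'a set)" by (simp add: of_nat_eq_0_iff_char_dvd)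
  hence "CHAR('a) dvd p ^ (m * 2)" using p(2) card_field by (simp add: power_mult)
  hence "CHAR('a) = p" using prime_char p(1) prime_dvd_power primes_dvd_imp_eq by blast
  thus ?thesis using prime_char p by blast
qed

lemma power_q_add: "(x + y :: 'a) ^ q = x ^ q + y ^ q"
  using q_power_of_CHAR freshmans_dream' by blast

lemma power_q_sum: "(sum f A :: 'a) ^ q = (\<Sum>i\<in>A. f i ^ q)"
  using q_power_of_CHAR freshmans_dream_sum' by blast

lemma power_q_zero [simp]: "(0::'a) ^ q = 0"
  using q_ge_2 by simp

lemma power_q_minus: "(- x :: 'a) ^ q = - (x ^ q)"
  using power_q_add[of x "- x"] by (simp add: eq_neg_iff_add_eq_0 add.commute)

lemma power_q_diff: "(x - y :: 'a) ^ q = x ^ q - y ^ q"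
  using power_q_add[of x "- y"] power_q_minus[of y] by simp

lemma power_q_power_q [simp]: "((x :: 'a) ^ q) ^ q = x"
  using finite_field_power_card[of x] card_field by (simp flip: power_mult add: power2_eq_square)

lemma card_field_gt_1: "1 < card (UNIV :: 'a set)"
  unfolding card_field using q_ge_2 by (intro one_less_power) auto

lemma card_roots_power_q_le: "card {x :: 'a. x ^ q + c * x = 0} \<le> q"
proof -
  define P :: "'a poly" where "P = monom 1 q + [:0, c:]"
  have "coeff P q = 1" using q_ge_2 by (simp add: P_def coeff_pCons split: nat.split)
  hence "P \<noteq> 0" by auto
  have "degree [:0, c:] \<le> q" using q_ge_2 degree_pCons_le[of 0 "[:c:]"] by simp
  hence "degree P \<le> q" unfolding P_def using degree_add_le degree_monom_le by blast
  moreover have "{x. x ^ q + c * x = 0} = {x. poly P x = 0}" by (simp add: P_def poly_monom mult.commute)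
  ultimately show ?thesis using card_poly_roots_bound[OF \<open>P \<noteq> 0\<close>] by simp
qed

text \<open>The map \<open>x \<mapsto> x\<^sup>q - x\<close> has the cosets of \<open>Fq\<close> as fibres and takes values in
  \<open>{y. y\<^sup>q = -y}\<close>; as both sets are root sets of polynomials of degree \<open>q\<close>,
  counting the \<open>q\<^sup>2\<close> field elements forces both to have exactly \<open>q\<close> elements.\<close>

lemma card_Fq_and_antifixed: "card Fq = q \<and> card {y :: 'a. y ^ q = - y} = q"
proof -
  let ?L = "\<lambda>x::'a. x ^ q - x"
  let ?A = "{y :: 'a. y ^ q = - y}"
  have fibre: "card {x\<in>UNIV. ?L x = w} = card Fq" if w: "w \<in> range ?L" for w
  proof -
    obtain a where a: "w = ?L a" using w by blast
    have "{x\<in>UNIV. ?L x = w} = (\<lambda>k. k + a) ` Fq"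
    proof (intro equalityI subsetI)
      fix x assume "x \<in> {x\<in>UNIV. ?L x = w}"
      hence "(x - a) ^ q = x - a" using a by (simp add: power_q_diff algebra_simps)
      thus "x \<in> (\<lambda>k. k + a) ` Fq" by (intro image_eqI[of _ _ "x - a"]) (auto simp: Fq_def)
    qed (auto simp: a Fq_def power_q_add)
    thus ?thesis by (simp add: card_image)
  qed
  have "card (UNIV :: 'a set) = card Fq * card (range ?L)"
    by (rule card_eq_card_fiber_mult) (use fibre in auto)
  hence prod: "card Fq * card (range ?L) = q * q" using card_field by (simp add: power2_eq_square)
  have "range ?L \<subseteq> ?A" by (auto simp: power_q_diff)
  hence range_le: "card (range ?L) \<le> card ?A" by (intro card_mono) auto
  have "?A = {y. y ^ q + 1 * y = 0}" by (auto simp: eq_neg_iff_add_eq_0)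
  hence A_le: "card ?A \<le> q" using card_roots_power_q_le[of 1] by simp
  have "Fq = {x. x ^ q + (-1) * x = 0}" by (auto simp: Fq_def)
  hence "card Fq \<le> q" using card_roots_power_q_le[of "-1"] by simp
  moreover have "card (range ?L) \<le> q" using range_le A_le by linarith
  ultimately have "card Fq = q \<and> card (range ?L) = q" using prod by (rule factors_eq_of_square)
  thus ?thesis using range_le A_le by simp
qed

lemma card_Fq: "card Fq = q"
  using card_Fq_and_antifixed by simp

lemma exists_antifixed: "\<exists>\<theta>::'a. \<theta> \<noteq> 0 \<and> \<theta> ^ q = - \<theta>"
proof -
  have "{y :: 'a. y ^ q = - y} \<subseteq> {0} \<Longrightarrow> card {y :: 'a. y ^ q = - y} \<le> 1"
    using card_mono[of "{0::'a}"] by simp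
  hence "\<not> {y :: 'a. y ^ q = - y} \<subseteq> {0}" using card_Fq_and_antifixed q_ge_2 by linarith
  thus ?thesis by blast
qed

lemma exists_not_in_Fq: "\<exists>w::'a. w ^ q \<noteq> w"
proof (rule ccontr)
  assume "\<not> ?thesis"
  hence "Fq = UNIV" by (auto simp: Fq_def)
  hence "q = q ^ 2" using card_Fq card_field by simp
  thus False using q_ge_2 by (simp add: power2_eq_square)
qed

lemma herm_diff_right: "herm q n x (\<lambda>i. a i - b i) = herm q n x a - herm q n x (b :: nat \<Rightarrow> 'a)"
  unfolding herm_def by (simp add: power_q_diff algebra_simps sum_subtractf)

lemma herm_zero_right [simp]: "herm q n x (\<lambda>_. 0 :: 'a) = 0"
  unfolding herm_def by simp

lemma herm_commute_power_q: "herm q n y x = (herm q n x (y :: nat \<Rightarrow> 'a)) ^ q"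
  unfolding herm_def power_q_sum by (simp add: power_mult_distrib mult.commute)

lemma herm_surj_right:
  assumes C: "linear_code n (C :: (nat \<Rightarrow> 'a) set)" and c: "c \<in> C" "herm q n x c \<noteq> 0"
  shows "(\<lambda>c. herm q n x c) ` C = UNIV"
proof -
  have "w = herm q n x (\<lambda>i. (w / herm q n x c) ^ q * c i)" for w
    unfolding herm_smult_right using c(2) by simp
  thus ?thesis using linear_code_smult[OF C c(1)] by blast
qed

lemma card_herm_orthogonal_code:
  assumes C: "linear_code n (C :: (nat \<Rightarrow> 'a) set)" and x: "x \<notin> herm_dual q n C" "x \<in> vecs n"
  shows "card {c\<in>C. herm q n x c = 0} * card (UNIV :: 'a set) = card C"
proof -
  obtain c where "c \<in> C" "herm q n x c \<noteq> 0" using x unfolding herm_dual_def by blast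
  from card_eq_card_kernel_mult[OF linear_code_finite[OF C] _ _ _ herm_surj_right[OF C this]]
  show ?thesis by (simp add: linear_code_add[OF C] linear_code_diff[OF C] herm_diff_right)
qed

lemma sum_card_herm_orthogonal_vecs:
  assumes C: "linear_code n (C :: (nat \<Rightarrow> 'a) set)"
  defines "Q \<equiv> card (UNIV :: 'a set)"
  shows "Q * (\<Sum>c\<in>C. card {x\<in>vecs n. herm q n x c = 0}) = card C * Q ^ n + (Q - 1) * Q ^ n"
proof -
  have "Q * card {x\<in>vecs n. herm q n x c = 0} = Q ^ n + (if c = (\<lambda>_. 0) then (Q - 1) * Q ^ n else 0)"
    if "c \<in> C" for c
  proof (cases "c = (\<lambda>_. 0)")
    case True
    thus ?thesis using card_vecs card_field_gt_1 unfolding Q_def by (simp add: algebra_simps)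
  next
    case False
    thus ?thesis using card_herm_orthogonal_vecs[of c n q] that linear_code_subset_vecs[OF C]
      unfolding Q_def by (auto simp: mult.commute)
  qed
  thus ?thesis using linear_code_zero[OF C] linear_code_finite[OF C]
    by (simp add: sum_distrib_left sum.distrib)
qed

lemma sum_card_herm_orthogonal_code:
  assumes C: "linear_code n (C :: (nat \<Rightarrow> 'a) set)"
  defines "Q \<equiv> card (UNIV :: 'a set)"
  shows "Q * (\<Sum>x\<in>vecs n. card {c\<in>C. herm q n x c = 0})
    = Q ^ n * card C + card (herm_dual q n C) * ((Q - 1) * card C)"
proof -
  let ?D = "herm_dual q n C"
  have "Q * card {c\<in>C. herm q n x c = 0} = card C + (if x \<in> ?D then (Q - 1) * card C else 0)"
    if "x \<in> vecs n" for x
  proof (cases "x \<in> ?D")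
    case True
    hence "{c\<in>C. herm q n x c = 0} = C" unfolding herm_dual_def by auto
    thus ?thesis using True card_field_gt_1 unfolding Q_def by (simp add: algebra_simps)
  next
    case False
    thus ?thesis using card_herm_orthogonal_code[OF C False that] unfolding Q_def by (simp add: mult.commute)
  qed
  moreover have "(\<Sum>x\<in>vecs n. if x \<in> ?D then (Q - 1) * card C else 0) = card ?D * ((Q - 1) * card C)"
    using sum.inter_filter[of "vecs n" "\<lambda>_. (Q - 1) * card C" "\<lambda>x. x \<in> ?D"] finite_vecs[where 'a = 'a]
    by (simp add: herm_dual_def)
  ultimately show ?thesis using card_vecs[where 'a = 'a] unfolding Q_def
    by (simp add: sum_distrib_left sum.distrib)
qed

text \<open>Double counting of the pairs \<open>(x, c) \<in> vecs n \<times> C\<close> with \<open>herm q n x c = 0\<close>.\<close>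

lemma card_herm_dual_mult:
  assumes C: "linear_code n (C :: (nat \<Rightarrow> 'a) set)"
  shows "card (herm_dual q n C) * card C = card (UNIV :: 'a set) ^ n"
proof -
  define Q where "Q = card (UNIV :: 'a set)"
  have "(\<Sum>c\<in>C. card {x\<in>vecs n. herm q n x c = 0}) = (\<Sum>x\<in>vecs n. card {c\<in>C. herm q n x c = 0})"
    by (rule sum_multicount_gen) (simp_all add: linear_code_finite[OF C] finite_vecs)
  hence "card C * Q ^ n + (Q - 1) * Q ^ n = Q ^ n * card C + card (herm_dual q n C) * ((Q - 1) * card C)"
    using sum_card_herm_orthogonal_vecs[OF C] sum_card_herm_orthogonal_code[OF C] unfolding Q_def by metis
  hence "(Q - 1) * Q ^ n = (Q - 1) * (card (herm_dual q n C) * card C)" by (simp add: algebra_simps)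
  thus ?thesis using card_field_gt_1 unfolding Q_def by simp
qed

lemma herm_dual_herm_dual:
  assumes C: "linear_code n (C :: (nat \<Rightarrow> 'a) set)"
  shows "herm_dual q n (herm_dual q n C) = C"
proof -
  let ?D = "herm_dual q n C"
  have "C \<subseteq> herm_dual q n ?D"
  proof
    fix c assume c: "c \<in> C"
    have "herm q n c x = 0" if "x \<in> ?D" for x
      using that c herm_commute_power_q[where y = c and x = x] unfolding herm_dual_def by simp
    thus "c \<in> herm_dual q n ?D" using c linear_code_subset_vecs[OF C] unfolding herm_dual_def by blast
  qed
  moreover have "card (herm_dual q n ?D) = card C"
  proof -
    have "card ?D * card (herm_dual q n ?D) = card ?D * card C"
      using card_herm_dual_mult[OF C] card_herm_dual_mult[OF linear_code_herm_dual[of n q C]]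
      by (metis mult.commute)
    thus ?thesis using card_linear_code_pos[OF linear_code_herm_dual[of n q C]] by simp
  qed
  ultimately show ?thesis
    using linear_code_finite[OF linear_code_herm_dual] by (metis card_subset_eq)
qed

lemma herm_dual_dimensions:
  fixes C :: "(nat \<Rightarrow> 'a) set"
  assumes C: "linear_code n C" and k: "card C = card (UNIV :: 'a set) ^ k"
    and I: "card (C \<inter> herm_dual q n C) = card (UNIV :: 'a set) ^ I"
  shows "k \<le> n" "card (herm_dual q n C) = card (UNIV :: 'a set) ^ (n - k)" "I \<le> k" "I \<le> n - k"
proof -
  define Q where "Q = card (UNIV :: 'a set)"
  have "1 < Q" unfolding Q_def by (rule card_field_gt_1)
  have fin: "finite C" "finite (herm_dual q n C)"
    using linear_code_finite C linear_code_herm_dual by blast+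
  show "k \<le> n" using card_linear_code_le[OF C] k \<open>1 < Q\<close> unfolding Q_def by simp
  hence "card (herm_dual q n C) * Q ^ k = Q ^ (n - k) * Q ^ k"
    using card_herm_dual_mult[OF C] k unfolding Q_def by (simp flip: power_add)
  thus D: "card (herm_dual q n C) = Q ^ (n - k)" unfolding Q_def using \<open>1 < Q\<close> Q_def by simp
  show "I \<le> k" using card_mono[OF fin(1), of "C \<inter> herm_dual q n C"] k I \<open>1 < Q\<close> unfolding Q_def by simp
  show "I \<le> n - k" using card_mono[OF fin(2), of "C \<inter> herm_dual q n C"] D I \<open>1 < Q\<close> unfolding Q_def by simp
qed

end

section \<open>Cyclic codes and generator polynomials\<close>

definition code_poly :: "nat \<Rightarrow> (nat \<Rightarrow> 'a::comm_monoid_add) \<Rightarrow> 'a poly" where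
  "code_poly n c = (\<Sum>j<n. monom (c j) j)"

definition bounded_polys :: "nat \<Rightarrow> 'a::zero poly set" where
  "bounded_polys m = {p. \<forall>i\<ge>m. coeff p i = 0}"

definition xn_minus_1 :: "nat \<Rightarrow> 'a::comm_ring_1 poly" where
  "xn_minus_1 n = monom 1 n - 1"

lemma coeff_code_poly: "coeff (code_poly n c) i = (if i < n then c i else 0)"
  unfolding code_poly_def by (simp add: coeff_sum)

lemma code_poly_add: "code_poly n (\<lambda>i. a i + b i) = code_poly n a + code_poly n b"
  by (rule poly_eqI) (simp add: coeff_code_poly)

lemma code_poly_smult: "code_poly n (\<lambda>i. s * a i) = smult s (code_poly n (a :: nat \<Rightarrow> 'a::comm_semiring_1))"
  by (rule poly_eqI) (simp add: coeff_code_poly)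

lemma code_poly_zero [simp]: "code_poly n (\<lambda>_. 0) = 0"
  by (rule poly_eqI) (simp add: coeff_code_poly)

lemma bounded_polys_iff: "p \<in> bounded_polys m \<longleftrightarrow> p = 0 \<or> degree p < m"
proof
  assume "p \<in> bounded_polys m"
  hence "m \<le> degree p \<Longrightarrow> lead_coeff p = 0" by (simp add: bounded_polys_def)
  thus "p = 0 \<or> degree p < m" by (meson leading_coeff_0_iff not_le)
qed (auto simp: bounded_polys_def coeff_eq_0)

lemma code_poly_bounded: "code_poly n c \<in> bounded_polys n"
  by (simp add: bounded_polys_def coeff_code_poly)

lemma bij_betw_code_poly: "bij_betw (code_poly n) (vecs n) (bounded_polys n)"
proof (rule bij_betw_byWitness[where f' = coeff])
  show "\<forall>c\<in>vecs n. coeff (code_poly n c) = c"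
    by (auto simp: vecs_def coeff_code_poly)
  show "\<forall>p\<in>bounded_polys n. code_poly n (coeff p) = p"
    by (auto intro: poly_eqI simp: bounded_polys_def coeff_code_poly)
qed (auto simp: code_poly_bounded vecs_def bounded_polys_def coeff_code_poly)

lemma card_bounded_polys:
  "card (bounded_polys m :: 'a::{comm_monoid_add,finite} poly set) = card (UNIV :: 'a set) ^ m"
  using bij_betw_same_card[OF bij_betw_code_poly] card_vecs by metis

lemma coeff_xn_minus_1: "coeff (xn_minus_1 n) i = (if i = n then 1 else 0) - (if i = 0 then 1 else 0)"
  by (simp add: xn_minus_1_def coeff_1)

lemma degree_xn_minus_1: "0 < n \<Longrightarrow> degree (xn_minus_1 n :: 'a::comm_ring_1 poly) = n"
  by (intro antisym degree_le le_degree) (auto simp: coeff_xn_minus_1)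

lemma xn_minus_1_nonzero:
  assumes "0 < n" shows "xn_minus_1 n \<noteq> (0 :: 'a::comm_ring_1 poly)"
proof
  assume "xn_minus_1 n = (0 :: 'a poly)"
  hence "coeff (xn_minus_1 n :: 'a poly) n = 0" by simp
  thus False using assms by (simp add: coeff_xn_minus_1)
qed

lemma mod_xn_minus_1_bounded:
  assumes "0 < n" "p \<in> bounded_polys n"
  shows "p mod xn_minus_1 n = (p :: 'a::field poly)"
  using assms by (intro mod_poly_less) (auto simp: bounded_polys_iff degree_xn_minus_1)

lemma poly_xn_minus_1: "poly (xn_minus_1 n) x = x ^ n - 1"
  by (simp add: xn_minus_1_def poly_monom)

lemma code_poly_cshift:
  fixes c :: "nat \<Rightarrow> 'a::field"
  assumes n: "0 < n" and c: "c \<in> vecs n"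
  shows "code_poly n (cshift n c) = pCons 0 (code_poly n c) mod xn_minus_1 n"
proof -
  have eq: "pCons 0 (code_poly n c) = code_poly n (cshift n c) + [:c (n - 1):] * xn_minus_1 n"
  proof (rule poly_eqI)
    fix i
    have "(i + n - 1) mod n = i - 1" if "0 < i" "i < n"
      using that by (cases i) simp_all
    moreover have "j = n - 1" if "j < n" "\<not> Suc j < n" for j using that by simp
    ultimately show "coeff (pCons 0 (code_poly n c)) i = coeff (code_poly n (cshift n c) + [:c (n - 1):] * xn_minus_1 n) i"
      using n c by (cases i) (auto simp: coeff_code_poly coeff_xn_minus_1 cshift_def vecs_def)
  qed
  show ?thesis
    unfolding eq mod_mult_self1 by (rule mod_xn_minus_1_bounded[symmetric, OF n code_poly_bounded])
qed

definition code_ideal :: "nat \<Rightarrow> (nat \<Rightarrow> 'a::field) set \<Rightarrow> 'a poly set" where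
  "code_ideal n E = {f. f mod xn_minus_1 n \<in> code_poly n ` E}"

context
  fixes n :: nat and E :: "(nat \<Rightarrow> 'a::field) set"
  assumes n_pos: "0 < n" and cyclic: "cyclic_code n E"
begin

lemma code_ideal_add:
  assumes "f \<in> code_ideal n E" "h \<in> code_ideal n E"
  shows "f + h \<in> code_ideal n E"
proof -
  obtain a b where ab: "a \<in> E" "b \<in> E"
    "f mod xn_minus_1 n = code_poly n a" "h mod xn_minus_1 n = code_poly n b"
    using assms unfolding code_ideal_def by blast
  have "(f + h) mod xn_minus_1 n = code_poly n (\<lambda>i. a i + b i)"
    by (simp add: mod_add_eq[symmetric] ab code_poly_add mod_xn_minus_1_bounded[OF n_pos] code_poly_bounded
        flip: code_poly_add)
  thus ?thesis unfolding code_ideal_def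
    using linear_code_add[OF cyclic_code_linear[OF cyclic] ab(1,2)] by auto
qed

lemma code_ideal_smult:
  assumes "f \<in> code_ideal n E" shows "smult s f \<in> code_ideal n E"
proof -
  obtain c where c: "c \<in> E" "f mod xn_minus_1 n = code_poly n c"
    using assms unfolding code_ideal_def by blast
  hence "smult s f mod xn_minus_1 n = code_poly n (\<lambda>i. s * c i)"
    by (simp add: mod_smult_left code_poly_smult)
  thus ?thesis unfolding code_ideal_def
    using linear_code_smult[OF cyclic_code_linear[OF cyclic] c(1)] by auto
qed

lemma zero_in_code_ideal: "0 \<in> code_ideal n E"
  unfolding code_ideal_def
  by (simp add: rev_image_eqI[OF linear_code_zero[OF cyclic_code_linear[OF cyclic]]])

lemma code_ideal_pCons_0: "f \<in> code_ideal n E \<Longrightarrow> pCons 0 f \<in> code_ideal n E"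
proof -
  assume "f \<in> code_ideal n E"
  then obtain c where c: "c \<in> E" "f mod xn_minus_1 n = code_poly n c" unfolding code_ideal_def by blast
  have "pCons 0 f mod xn_minus_1 n = pCons 0 (f mod xn_minus_1 n) mod xn_minus_1 n"
    using mod_mult_right_eq[of "[:0, 1:]" f "xn_minus_1 n"] by simp
  also have "\<dots> = code_poly n (cshift n c)"
    using code_poly_cshift[OF n_pos, of c] c linear_code_subset_vecs[OF cyclic_code_linear[OF cyclic]]
    by auto
  finally show ?thesis unfolding code_ideal_def using cyclic_code_cshift[OF cyclic c(1)] by auto
qed

lemma code_ideal_mult: "f \<in> code_ideal n E \<Longrightarrow> h * f \<in> code_ideal n E"
proof (induction h)
  case (pCons a h)
  thus ?case using code_ideal_add code_ideal_smult code_ideal_pCons_0 by simp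
qed (simp add: zero_in_code_ideal)

lemma xn_minus_1_in_code_ideal: "xn_minus_1 n \<in> code_ideal n E"
  using linear_code_zero[OF cyclic_code_linear[OF cyclic]] by (force simp: code_ideal_def)

lemma code_poly_image_eq_code_ideal: "code_poly n ` E = code_ideal n E \<inter> bounded_polys n"
  using code_poly_bounded mod_xn_minus_1_bounded[OF n_pos] unfolding code_ideal_def by fastforce

text \<open>The ideal \<open>code_ideal n E\<close> is generated by any of its nonzero elements of least degree.\<close>

lemma cyclic_code_generator:
  obtains g where "g dvd xn_minus_1 n" "code_poly n ` E = {p \<in> bounded_polys n. g dvd p}"
proof -
  obtain g where g: "g \<in> code_ideal n E" "g \<noteq> 0"
    and least: "\<And>f. f \<in> code_ideal n E \<Longrightarrow> f \<noteq> 0 \<Longrightarrow> degree g \<le> degree f"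
    using ex_has_least_nat[of "\<lambda>f. f \<in> code_ideal n E \<and> f \<noteq> 0" "xn_minus_1 n" degree]
      xn_minus_1_in_code_ideal xn_minus_1_nonzero[OF n_pos] by blast
  have "f \<in> code_ideal n E \<longleftrightarrow> g dvd f" for f
  proof
    assume f: "f \<in> code_ideal n E"
    have "f + smult (-1) ((f div g) * g) \<in> code_ideal n E"
      by (intro code_ideal_add f code_ideal_smult code_ideal_mult g(1))
    moreover have "f + smult (-1) ((f div g) * g) = f mod g"
      using minus_div_mult_eq_mod[of f g] by simp
    ultimately have "f mod g \<in> code_ideal n E" by simp
    thus "g dvd f"
      using least[of "f mod g"] degree_mod_less'[OF g(2)] by (force simp: mod_eq_0_iff_dvd)
  qed (auto elim!: dvdE simp: mult.commute intro: code_ideal_mult[OF g(1)])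
  hence "g dvd xn_minus_1 n" "code_poly n ` E = {p \<in> bounded_polys n. g dvd p}"
    using xn_minus_1_in_code_ideal code_poly_image_eq_code_ideal by auto
  thus thesis by (rule that)
qed

end

lemma card_code_of_generator:
  fixes E :: "(nat \<Rightarrow> 'a::{field,finite}) set"
  assumes E: "E \<subseteq> vecs n" and g: "g \<noteq> 0" "code_poly n ` E = {p \<in> bounded_polys n. g dvd p}"
  shows "card E = card (UNIV :: 'a set) ^ (n - degree g)"
proof -
  have "card E = card (code_poly n ` E)"
    using inj_on_subset[OF bij_betw_imp_inj_on[OF bij_betw_code_poly] E] by (simp add: card_image)
  also have "code_poly n ` E = (\<lambda>h. g * h) ` bounded_polys (n - degree g)"
  proof -
    have "g * h \<in> bounded_polys n \<longleftrightarrow> h \<in> bounded_polys (n - degree g)" for h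
      using g(1) by (cases "h = 0") (auto simp: bounded_polys_iff degree_mult_eq)
    thus ?thesis unfolding g(2) by (auto elim!: dvdE)
  qed
  also have "card \<dots> = card (bounded_polys (n - degree g) :: 'a poly set)"
    using g(1) by (intro card_image inj_onI) simp
  finally show ?thesis by (simp add: card_bounded_polys)
qed

lemma power_power_root_of_unity: "\<alpha> ^ n = 1 \<Longrightarrow> (\<alpha> ^ i) ^ n = (1 :: 'a::comm_monoid_mult)"
  by (metis mult.commute power_mult power_one)

context
  fixes emb :: "'a::field \<Rightarrow> 'b::field"
  assumes emb: "field_embedding emb"
begin

lemma emb_add: "emb (x + y) = emb x + emb y"
  using emb unfolding field_embedding_def by blast

lemma emb_mult: "emb (x * y) = emb x * emb y"
  using emb unfolding field_embedding_def by blast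

lemma emb_0: "emb 0 = 0"
  using emb_add[of 0 0] by (metis add.right_neutral add_left_cancel)

lemma emb_1: "emb 1 = 1"
  using emb unfolding field_embedding_def by blast

lemma emb_diff: "emb (x - y) = emb x - emb y"
  using emb_add[of "x - y" y] by simp

lemma emb_eq_0_iff: "emb x = 0 \<longleftrightarrow> x = 0"
  using emb_mult[of x "inverse x"] emb_1 emb_0 by (cases "x = 0") auto

lemma emb_sum: "emb (sum f A) = (\<Sum>i\<in>A. emb (f i))"
  by (induction A rule: infinite_finite_induct) (simp_all add: emb_0 emb_add)

lemma map_poly_emb_add: "map_poly emb (p + r) = map_poly emb p + map_poly emb r"
  by (rule poly_eqI) (simp add: coeff_map_poly emb_0 emb_add)

lemma map_poly_emb_mult: "map_poly emb (p * r) = map_poly emb p * map_poly emb r"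
  by (rule poly_eqI) (simp add: coeff_map_poly coeff_mult emb_0 emb_sum emb_mult)

lemma degree_map_poly_emb: "degree (map_poly emb p) = degree p"
  by (rule degree_map_poly) (simp add: emb_eq_0_iff)

lemma map_poly_emb_xn_minus_1: "map_poly emb (xn_minus_1 n) = xn_minus_1 n"
  by (rule poly_eqI) (simp add: coeff_map_poly coeff_xn_minus_1 emb_0 emb_1 emb_diff)

lemma defining_set_code_poly:
  "defining_set emb \<alpha> n E = {i. i < n \<and> (\<forall>c\<in>E. poly (map_poly emb (code_poly n c)) (\<alpha> ^ i) = 0)}"
proof -
  have "map_poly emb (code_poly n c) = code_poly n (\<lambda>j. emb (c j))" for c
    by (rule poly_eqI) (simp add: coeff_map_poly coeff_code_poly emb_0)
  thus ?thesis by (simp add: defining_set_def code_poly_def poly_sum poly_monom)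
qed

lemma defining_set_of_generator:
  assumes "\<alpha> ^ n = 1" "0 < n"
    and g: "g dvd xn_minus_1 n" "code_poly n ` E = {p \<in> bounded_polys n. g dvd p}"
  shows "defining_set emb \<alpha> n E = {i. i < n \<and> poly (map_poly emb g) (\<alpha> ^ i) = 0}"
proof -
  have root: "poly (map_poly emb (xn_minus_1 n)) (\<alpha> ^ i) = 0" for i
    using power_power_root_of_unity[OF assms(1)] by (simp add: map_poly_emb_xn_minus_1 poly_xn_minus_1)
  have "g mod xn_minus_1 n \<in> code_poly n ` E"
    unfolding g(2) bounded_polys_iff
    using g(1) degree_mod_less'[OF xn_minus_1_nonzero[OF assms(2)], of g] degree_xn_minus_1[OF assms(2), where 'a = 'a]
    by (auto simp: dvd_mod)
  then obtain c0 where c0: "c0 \<in> E" "code_poly n c0 = g mod xn_minus_1 n" by auto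
  have decomp: "map_poly emb g = map_poly emb (g div xn_minus_1 n) * map_poly emb (xn_minus_1 n)
      + map_poly emb (g mod xn_minus_1 n)"
    by (simp flip: map_poly_emb_add map_poly_emb_mult)
  have "i \<in> defining_set emb \<alpha> n E \<longleftrightarrow> i < n \<and> poly (map_poly emb g) (\<alpha> ^ i) = 0" for i
  proof
    assume "i \<in> defining_set emb \<alpha> n E"
    hence "i < n" "poly (map_poly emb (g mod xn_minus_1 n)) (\<alpha> ^ i) = 0"
      using c0 unfolding defining_set_code_poly by force+
    thus "i < n \<and> poly (map_poly emb g) (\<alpha> ^ i) = 0" using decomp root by simp
  next
    assume i: "i < n \<and> poly (map_poly emb g) (\<alpha> ^ i) = 0"
    have "poly (map_poly emb (code_poly n c)) (\<alpha> ^ i) = 0" if "c \<in> E" for c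
    proof -
      have "g dvd code_poly n c" using that g(2) by (metis (mono_tags) image_eqI mem_Collect_eq)
      then obtain h where "code_poly n c = g * h" by (elim dvdE)
      thus ?thesis using i by (simp add: map_poly_emb_mult)
    qed
    thus "i \<in> defining_set emb \<alpha> n E" using i unfolding defining_set_code_poly by simp
  qed
  thus ?thesis by blast
qed

end

lemma inj_on_power_primitive_root:
  assumes "primitive_root_of_unity n \<alpha>"
  shows "inj_on (\<lambda>i. \<alpha> ^ i) {..<n}"
proof -
  have "\<alpha> ^ i \<noteq> \<alpha> ^ j" if "i < j" "j < n" for i j
  proof
    assume "\<alpha> ^ i = \<alpha> ^ j"
    moreover have "\<alpha> \<noteq> 0"
      using assms that unfolding primitive_root_of_unity_def by (metis power_0_left zero_neq_one less_nat_zero_code)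
    ultimately have "\<alpha> ^ (j - i) = 1" using that by (simp add: power_diff)
    thus False using assms that unfolding primitive_root_of_unity_def by simp
  qed
  thus ?thesis by (intro inj_onI) (metis lessThan_iff linorder_neqE_nat)
qed

text \<open>The \<open>n\<close> distinct roots \<open>\<alpha>\<^sup>i\<close> of \<open>x\<^sup>n - 1 = G H\<close> are shared between \<open>G\<close> and \<open>H\<close>,
  which have at most \<open>degree G\<close> and \<open>degree H\<close> roots respectively.\<close>

lemma card_roots_of_unity_of_factor:
  fixes G H :: "'b::field poly"
  assumes "primitive_root_of_unity n \<alpha>" "0 < n" "G * H = xn_minus_1 n"
  shows "card {i. i < n \<and> poly G (\<alpha> ^ i) = 0} = degree G"
proof -
  let ?A = "(\<lambda>i. \<alpha> ^ i) ` {..<n}"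
  have nz: "G \<noteq> 0" "H \<noteq> 0" using assms(3) xn_minus_1_nonzero[OF assms(2)] by auto
  have deg: "degree G + degree H = n"
    using assms(3) degree_xn_minus_1[OF assms(2)] nz by (metis degree_mult_eq)
  have inj: "inj_on (\<lambda>i. \<alpha> ^ i) {..<n}" by (rule inj_on_power_primitive_root[OF assms(1)])
  have "?A \<subseteq> {x. poly G x = 0} \<union> {x. poly H x = 0}"
  proof
    fix x assume "x \<in> ?A"
    hence "poly (xn_minus_1 n) x = 0"
      using assms(1) power_power_root_of_unity unfolding primitive_root_of_unity_def
      by (auto simp: poly_xn_minus_1)
    thus "x \<in> {x. poly G x = 0} \<union> {x. poly H x = 0}" by (simp flip: assms(3))
  qed
  hence "n \<le> card (?A \<inter> {x. poly G x = 0}) + card (?A \<inter> {x. poly H x = 0})"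
    using card_Un_le[of "?A \<inter> {x. poly G x = 0}" "?A \<inter> {x. poly H x = 0}"] card_image[OF inj]
    by (simp add: Int_Un_distrib[symmetric] Int_absorb2)
  moreover have roots_le: "card (?A \<inter> {x. poly P x = 0}) \<le> degree P" if "P \<noteq> 0" for P :: "'b poly"
    using card_mono[OF poly_roots_finite[OF that], of "?A \<inter> _"] card_poly_roots_bound[OF that] by force
  ultimately have "card (?A \<inter> {x. poly G x = 0}) = degree G"
    using deg roots_le[OF nz(1)] roots_le[OF nz(2)] by linarith
  moreover have "?A \<inter> {x. poly G x = 0} = (\<lambda>i. \<alpha> ^ i) ` {i. i < n \<and> poly G (\<alpha> ^ i) = 0}" by auto
  moreover have "inj_on (\<lambda>i. \<alpha> ^ i) {i. i < n \<and> poly G (\<alpha> ^ i) = 0}"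
    using inj by (rule inj_on_subset) auto
  ultimately show ?thesis by (simp add: card_image)
qed

lemma card_cyclic_code:
  fixes E :: "(nat \<Rightarrow> 'a::{field,finite}) set"
  assumes n: "0 < n" and E: "cyclic_code n E"
    and emb: "field_embedding emb" and \<alpha>: "primitive_root_of_unity n \<alpha>"
  shows "card E = card (UNIV :: 'a set) ^ (n - card (defining_set emb \<alpha> n E))"
proof -
  obtain g where g: "g dvd xn_minus_1 n" "code_poly n ` E = {p \<in> bounded_polys n. g dvd p}"
    using cyclic_code_generator[OF n E] by blast
  obtain h where h: "xn_minus_1 n = g * h" using g(1) by (elim dvdE)
  hence "g \<noteq> 0" using xn_minus_1_nonzero[OF n] by auto
  have "map_poly emb g * map_poly emb h = xn_minus_1 n"
    using h by (metis emb map_poly_emb_mult map_poly_emb_xn_minus_1)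
  hence "card (defining_set emb \<alpha> n E) = degree g"
    using defining_set_of_generator[OF emb _ n g] card_roots_of_unity_of_factor[OF \<alpha> n]
      degree_map_poly_emb[OF emb] \<alpha> unfolding primitive_root_of_unity_def by simp
  thus ?thesis
    using card_code_of_generator[OF linear_code_subset_vecs[OF cyclic_code_linear[OF E]] \<open>g \<noteq> 0\<close> g(2)]
    by simp
qed

section \<open>Sums and intersections of cyclic codes\<close>

definition code_sum :: "(nat \<Rightarrow> 'a::field) set \<Rightarrow> (nat \<Rightarrow> 'a) set \<Rightarrow> (nat \<Rightarrow> 'a) set" where
  "code_sum C D = (\<lambda>(c, d) i. c i + d i) ` (C \<times> D)"

lemma code_sum_iff: "x \<in> code_sum C D \<longleftrightarrow> (\<exists>c\<in>C. \<exists>d\<in>D. x = (\<lambda>i. c i + d i))"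
  unfolding code_sum_def by auto

lemma code_sum_memI: "c \<in> C \<Longrightarrow> d \<in> D \<Longrightarrow> (\<lambda>i. c i + d i) \<in> code_sum C D"
  unfolding code_sum_iff by blast

lemma cyclic_code_sum:
  assumes C: "cyclic_code n C" and D: "cyclic_code n D"
  shows "cyclic_code n (code_sum C D)"
proof -
  note lin = cyclic_code_linear[OF C] cyclic_code_linear[OF D]
  have "(\<lambda>i. 0 + 0) \<in> code_sum C D" by (rule code_sum_memI) (use lin in \<open>auto intro: linear_code_zero\<close>)
  moreover have "code_sum C D \<subseteq> vecs n"
    using lin[THEN linear_code_subset_vecs] by (auto simp: code_sum_iff intro!: vecs_add)
  moreover have "(\<lambda>i. x i + y i) \<in> code_sum C D" if x: "x \<in> code_sum C D" and y: "y \<in> code_sum C D" for x y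
  proof -
    obtain c d c' d' where cd: "c \<in> C" "d \<in> D" "x = (\<lambda>i. c i + d i)"
      and cd': "c' \<in> C" "d' \<in> D" "y = (\<lambda>i. c' i + d' i)"
      using x y by (auto simp: code_sum_iff)
    thus ?thesis
      using code_sum_memI[OF linear_code_add[OF lin(1) cd(1) cd'(1)] linear_code_add[OF lin(2) cd(2) cd'(2)]]
      by (simp add: algebra_simps)
  qed
  moreover have "(\<lambda>i. a * x i) \<in> code_sum C D" if x: "x \<in> code_sum C D" for a x
  proof -
    obtain c d where cd: "c \<in> C" "d \<in> D" "x = (\<lambda>i. c i + d i)" using x by (auto simp: code_sum_iff)
    thus ?thesis
      using code_sum_memI[OF linear_code_smult[OF lin(1) cd(1), where s = a] linear_code_smult[OF lin(2) cd(2), where s = a]]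
      by (simp add: algebra_simps)
  qed
  moreover have "cshift n x \<in> code_sum C D" if x: "x \<in> code_sum C D" for x
  proof -
    obtain c d where "c \<in> C" "d \<in> D" "x = (\<lambda>i. c i + d i)" using x by (auto simp: code_sum_iff)
    moreover from this have "cshift n x = (\<lambda>i. cshift n c i + cshift n d i)" by (auto simp: cshift_def)
    ultimately show ?thesis using code_sum_memI C D cyclic_code_cshift by metis
  qed
  ultimately show ?thesis unfolding cyclic_code_def linear_code_def by simp
qed

lemma defining_set_code_sum:
  assumes emb: "field_embedding emb" and C: "linear_code n C" and D: "linear_code n D"
  shows "defining_set emb \<alpha> n (code_sum C D) = defining_set emb \<alpha> n C \<inter> defining_set emb \<alpha> n D"
proof -
  have "C \<subseteq> code_sum C D"
    using code_sum_memI[OF _ linear_code_zero[OF D]] by fastforce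
  moreover have "D \<subseteq> code_sum C D"
    using code_sum_memI[OF linear_code_zero[OF C]] by fastforce
  moreover have "(\<Sum>j<n. emb (x j) * (\<alpha> ^ i) ^ j) = 0"
    if x: "x \<in> code_sum C D" and i: "i \<in> defining_set emb \<alpha> n C \<inter> defining_set emb \<alpha> n D" for x i
  proof -
    obtain c d where "c \<in> C" "d \<in> D" "x = (\<lambda>i. c i + d i)" using x by (auto simp: code_sum_iff)
    thus ?thesis using i
      by (simp add: defining_set_def emb_add[OF emb] distrib_right sum.distrib)
  qed
  ultimately show ?thesis unfolding defining_set_def by blast
qed

text \<open>The fibres of \<open>(c, d) \<mapsto> c + d\<close> are the translates of the antidiagonal \<open>{(u, -u) | u \<in> C \<inter> D}\<close>.\<close>

lemma card_code_sum:
  assumes C: "linear_code n (C :: (nat \<Rightarrow> 'a::{field,finite}) set)" and D: "linear_code n D"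
  shows "card C * card D = card (C \<inter> D) * card (code_sum C D)"
proof -
  let ?f = "\<lambda>(c, d) i. c i + (d i :: 'a)"
  have "card {a \<in> C \<times> D. ?f a = w} = card (C \<inter> D)" if w: "w \<in> ?f ` (C \<times> D)" for w
  proof -
    obtain c0 d0 where c0: "c0 \<in> C" "d0 \<in> D" "w = (\<lambda>i. c0 i + d0 i)" using w by auto
    let ?g = "\<lambda>u. ((\<lambda>i. c0 i + u i), (\<lambda>i. d0 i - u i))"
    have "{a \<in> C \<times> D. ?f a = w} = ?g ` (C \<inter> D)"
    proof (intro equalityI subsetI)
      fix a assume "a \<in> {a \<in> C \<times> D. ?f a = w}"
      then obtain c d where a: "a = (c, d)" "c \<in> C" "d \<in> D" "\<And>i. c i + d i = c0 i + d0 i"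
        using c0(3) by (auto simp: fun_eq_iff)
      have "(\<lambda>i. c i - c0 i) = (\<lambda>i. d0 i - d i)" using a(4) by (simp add: fun_eq_iff algebra_simps)
      hence "(\<lambda>i. c i - c0 i) \<in> C \<inter> D" using linear_code_diff[OF C a(2) c0(1)] linear_code_diff[OF D c0(2) a(3)] by simp
      moreover have "a = ?g (\<lambda>i. c i - c0 i)" using a by (simp add: fun_eq_iff algebra_simps)
      ultimately show "a \<in> ?g ` (C \<inter> D)" by (intro image_eqI[where x = "\<lambda>i. c i - c0 i"])
    next
      fix a assume "a \<in> ?g ` (C \<inter> D)"
      thus "a \<in> {a \<in> C \<times> D. ?f a = w}"
        using linear_code_add[OF C c0(1)] linear_code_diff[OF D c0(2)] c0(3) by auto
    qed
    moreover have "inj ?g" by (rule injI) (simp add: fun_eq_iff)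
    ultimately show ?thesis by (simp add: card_image inj_on_subset)
  qed
  hence "card (C \<times> D) = card (C \<inter> D) * card (?f ` (C \<times> D))"
    using linear_code_finite[OF C] linear_code_finite[OF D] by (intro card_eq_card_fiber_mult) auto
  thus ?thesis unfolding code_sum_def by (simp add: card_cartesian_product)
qed

lemma card_mult_card_cyclic_codes:
  fixes C D :: "(nat \<Rightarrow> 'a::{field,finite}) set"
  assumes "0 < n" "cyclic_code n C" "cyclic_code n D"
    and "field_embedding emb" "primitive_root_of_unity n \<alpha>"
  shows "card C * card D = card (C \<inter> D) *
    card (UNIV :: 'a set) ^ (n - card (defining_set emb \<alpha> n C \<inter> defining_set emb \<alpha> n D))"
  using card_code_sum[OF assms(2,3)[THEN cyclic_code_linear]]
    card_cyclic_code[OF assms(1) cyclic_code_sum[OF assms(2,3)] assms(4,5)]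
    defining_set_code_sum[OF assms(4) assms(2,3)[THEN cyclic_code_linear]]
  by simp

lemma cshift_index_inverse:
  assumes "i < (n::nat)"
  shows "((i + n - 1) mod n + 1) mod n = i" and "((i + 1) mod n + n - 1) mod n = i"
proof -
  show "((i + n - 1) mod n + 1) mod n = i"
    using assms by (cases i) (simp_all add: mod_Suc)
  show "((i + 1) mod n + n - 1) mod n = i"
    using assms by (cases "i + 1 = n") (simp_all add: add.commute)
qed

lemma herm_cshift:
  assumes "0 < n"
  shows "herm q n (cshift n x) (cshift n y) = herm q n x (y :: nat \<Rightarrow> 'a::field)"
proof -
  have "herm q n (cshift n x) (cshift n y) = (\<Sum>i<n. x ((i + n - 1) mod n) * y ((i + n - 1) mod n) ^ q)"
    unfolding herm_def cshift_def by simp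
  also have "\<dots> = herm q n x y" unfolding herm_def
    by (rule sum.reindex_bij_witness[of _ "\<lambda>j. (j + 1) mod n" "\<lambda>i. (i + n - 1) mod n"])
       (use assms cshift_index_inverse in auto)
  finally show ?thesis .
qed

lemma inj_on_cshift:
  assumes "0 < n"
  shows "inj_on (cshift n) (vecs n)"
proof (rule inj_onI)
  fix x y :: "nat \<Rightarrow> 'a" assume xy: "x \<in> vecs n" "y \<in> vecs n" "cshift n x = cshift n y"
  have "x j = y j" for j
  proof (cases "j < n")
    case True
    have "cshift n x ((j + 1) mod n) = cshift n y ((j + 1) mod n)" using xy(3) by simp
    thus ?thesis using assms cshift_index_inverse(2)[OF True] by (simp add: cshift_def)
  qed (use xy in \<open>simp add: vecs_def\<close>)
  thus "x = y" by blast
qed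

lemma cshift_image_cyclic_code:
  assumes "0 < n" "cyclic_code n (C :: (nat \<Rightarrow> 'a::{field,finite}) set)"
  shows "cshift n ` C = C"
proof (rule card_subset_eq)
  show "cshift n ` C \<subseteq> C" using cyclic_code_cshift[OF assms(2)] by blast
  show "card (cshift n ` C) = card C"
    using inj_on_subset[OF inj_on_cshift[OF assms(1)] linear_code_subset_vecs[OF cyclic_code_linear[OF assms(2)]]]
    by (rule card_image)
qed (rule linear_code_finite[OF cyclic_code_linear[OF assms(2)]])

lemma cyclic_code_herm_dual:
  assumes n: "0 < n" and C: "cyclic_code n (C :: (nat \<Rightarrow> 'a::{field,finite}) set)"
  shows "cyclic_code n (herm_dual q n C)"
  unfolding cyclic_code_def
proof (intro conjI ballI linear_code_herm_dual)
  fix x assume x: "x \<in> herm_dual q n C"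
  have "herm q n (cshift n x) c = 0" if c: "c \<in> C" for c
  proof -
    have "c \<in> cshift n ` C" using c cshift_image_cyclic_code[OF n C] by simp
    then obtain c' where c': "c = cshift n c'" "c' \<in> C" by (rule imageE)
    hence "herm q n (cshift n x) c = herm q n x c'" using herm_cshift[OF n, of q x c'] by simp
    also have "\<dots> = 0" using x c'(2) unfolding herm_dual_def by simp
    finally show ?thesis .
  qed
  thus "cshift n x \<in> herm_dual q n C" unfolding herm_dual_def by (simp add: cshift_def vecs_def)
qed

context hermitian_field
begin

lemma card_Int_herm_dual:
  fixes C :: "(nat \<Rightarrow> 'a) set"
  assumes "0 < n" "cyclic_code n C" "field_embedding emb" "primitive_root_of_unity n \<alpha>"
  shows "card (C \<inter> herm_dual q n C) =
    card (UNIV :: 'a set) ^ card (defining_set emb \<alpha> n (herm_dual q n C) \<inter> defining_set emb \<alpha> n C)"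
proof -
  define I where "I = card (defining_set emb \<alpha> n (herm_dual q n C) \<inter> defining_set emb \<alpha> n C)"
  define Q where "Q = card (UNIV :: 'a set)"
  have "defining_set emb \<alpha> n (herm_dual q n C) \<inter> defining_set emb \<alpha> n C \<subseteq> {..<n}"
    by (auto simp: defining_set_def)
  hence "I \<le> n" unfolding I_def using card_mono[OF finite_lessThan] by fastforce
  have "card (C \<inter> herm_dual q n C) * Q ^ (n - I) = Q ^ n"
    using card_mult_card_cyclic_codes[OF assms(1,2) cyclic_code_herm_dual[OF assms(1,2)] assms(3,4)]
      card_herm_dual_mult[OF cyclic_code_linear[OF assms(2)]]
    unfolding I_def Q_def by (simp add: Int_commute mult.commute)
  also have "\<dots> = Q ^ I * Q ^ (n - I)" using \<open>I \<le> n\<close> by (simp flip: power_add)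
  moreover have "0 < Q" unfolding Q_def by (simp add: finite_UNIV_card_ge_0)
  ultimately show ?thesis unfolding I_def[symmetric] Q_def[symmetric] by simp
qed

end

section \<open>The symplectic embedding\<close>

locale hermitian_coordinates = hermitian_field q ty for q :: nat and ty :: "'a::{field,finite} itself" +
  fixes \<theta> w :: 'a
  assumes \<theta>_nonzero: "\<theta> \<noteq> 0" and \<theta>_power_q: "\<theta> ^ q = - \<theta>" and w_notin_Fq: "w ^ q \<noteq> w"
begin

text \<open>\<open>w, w_dual\<close> is a basis of \<open>'a\<close> over \<open>Fq\<close>, symplectic for \<open>symp_form\<close>;
  \<open>coord1, coord2\<close> are the coordinates in this basis.\<close>

definition symp_form :: "'a \<Rightarrow> 'a \<Rightarrow> 'a" where
  "symp_form u v = \<theta> * (u * v ^ q - u ^ q * v)"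

definition w_dual :: 'a where
  "w_dual = inverse (\<theta> * (w - w ^ q))"

definition coord1 :: "'a \<Rightarrow> 'a" where
  "coord1 z = symp_form z w_dual"

definition coord2 :: "'a \<Rightarrow> 'a" where
  "coord2 z = symp_form w z"

lemma symp_form_in_Fq: "symp_form u v ^ q = symp_form u v"
  unfolding symp_form_def
  by (simp add: power_mult_distrib power_q_diff \<theta>_power_q algebra_simps)

lemma w_dual_in_Fq: "w_dual ^ q = w_dual"
proof -
  have "(\<theta> * (w - w ^ q)) ^ q = \<theta> * (w - w ^ q)" using symp_form_in_Fq[of w 1] by (simp add: symp_form_def)
  thus ?thesis unfolding w_dual_def by (metis power_inverse)
qed

lemma w_dual_normalizes: "\<theta> * w_dual * (w - w ^ q) = 1"
  using \<theta>_nonzero w_notin_Fq by (simp add: w_dual_def field_simps)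

lemma coord1_eq: "coord1 z = \<theta> * w_dual * (z - z ^ q)"
  unfolding coord1_def symp_form_def using w_dual_in_Fq by (simp add: algebra_simps)

lemma coords_in_Fq: "coord1 z ^ q = coord1 z" "coord2 z ^ q = coord2 z"
  unfolding coord1_def coord2_def by (rule symp_form_in_Fq)+

lemma coords_decomposition: "coord1 z * w + coord2 z * w_dual = z"
proof -
  have "coord1 z * w + coord2 z * w_dual = z * (\<theta> * w_dual * (w - w ^ q))"
    unfolding coord1_eq coord2_def symp_form_def by (simp add: algebra_simps)
  thus ?thesis by (simp add: w_dual_normalizes)
qed

lemma coords_of_combination:
  assumes "a ^ q = a" "b ^ q = b"
  shows "coord1 (a * w + b * w_dual) = a" "coord2 (a * w + b * w_dual) = b"
proof -
  have "coord1 (a * w + b * w_dual) = a * (\<theta> * w_dual * (w - w ^ q))"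
    unfolding coord1_eq using assms w_dual_in_Fq by (simp add: power_q_add power_mult_distrib algebra_simps)
  thus "coord1 (a * w + b * w_dual) = a" by (simp add: w_dual_normalizes)
  have "coord2 (a * w + b * w_dual) = b * (\<theta> * w_dual * (w - w ^ q))"
    unfolding coord2_def symp_form_def using assms w_dual_in_Fq
    by (simp add: power_q_add power_mult_distrib algebra_simps)
  thus "coord2 (a * w + b * w_dual) = b" by (simp add: w_dual_normalizes)
qed

lemma symp_form_coords: "symp_form u v = coord1 u * coord2 v - coord1 v * coord2 u"
proof -
  have "coord1 u * coord2 v - coord1 v * coord2 u = symp_form u v * (\<theta> * w_dual * (w - w ^ q))"
    unfolding coord1_eq coord2_def symp_form_def by (simp add: algebra_simps)
  thus ?thesis by (simp add: w_dual_normalizes)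
qed

lemma coord1_add: "coord1 (u + v) = coord1 u + coord1 v"
  and coord2_add: "coord2 (u + v) = coord2 u + coord2 v"
  unfolding coord1_def coord2_def symp_form_def by (simp_all add: power_q_add algebra_simps)

lemma coord1_smult: "c ^ q = c \<Longrightarrow> coord1 (c * z) = c * coord1 z"
  and coord2_smult: "c ^ q = c \<Longrightarrow> coord2 (c * z) = c * coord2 z"
  unfolding coord1_def coord2_def symp_form_def by (simp_all add: power_mult_distrib algebra_simps)

lemma coord1_0 [simp]: "coord1 0 = 0" and coord2_0 [simp]: "coord2 0 = 0"
  unfolding coord1_def coord2_def symp_form_def by simp_all

lemma coords_eq_0_iff: "coord1 z = 0 \<and> coord2 z = 0 \<longleftrightarrow> z = 0"
  using coords_decomposition[of z] by (auto simp: coord1_def coord2_def symp_form_def)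

lemma sum_symp_form: "(\<Sum>i<n. symp_form (x i) (y i)) = \<theta> * (herm q n x y - herm q n x y ^ q)"
  unfolding symp_form_def herm_def power_q_sum
  by (simp add: power_mult_distrib sum_distrib_left sum_subtractf algebra_simps)

definition symp_embed :: "(nat \<Rightarrow> 'a) \<Rightarrow> (nat \<Rightarrow> 'a) \<times> (nat \<Rightarrow> 'a)" where
  "symp_embed x = ((\<lambda>i. coord1 (x i)), (\<lambda>i. coord2 (x i)))"

lemma inj_symp_embed: "inj symp_embed"
proof (rule injI)
  fix x y assume "symp_embed x = symp_embed y"
  hence "coord1 (x i) = coord1 (y i)" "coord2 (x i) = coord2 (y i)" for i
    unfolding symp_embed_def by (simp_all add: fun_eq_iff)
  hence "x i = y i" for i by (metis coords_decomposition)
  thus "x = y" by blast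
qed

lemma symp_embed_eq_0_iff: "symp_embed x = ((\<lambda>_. 0), (\<lambda>_. 0)) \<longleftrightarrow> x = (\<lambda>_. 0)"
  using coords_eq_0_iff by (auto simp: symp_embed_def fun_eq_iff)

lemma svecs_eq_image_symp_embed: "svecs Fq n = symp_embed ` vecs n"
proof (intro equalityI subsetI)
  fix v assume "v \<in> svecs Fq n"
  then obtain a b where v: "v = (a, b)" "\<And>i. a i ^ q = a i \<and> b i ^ q = b i" "\<And>i. n \<le> i \<Longrightarrow> a i = 0 \<and> b i = 0"
    unfolding svecs_def Fq_def by auto
  have "v = symp_embed (\<lambda>i. a i * w + b i * w_dual)"
    using v(1,2) coords_of_combination by (simp add: symp_embed_def)
  moreover have "(\<lambda>i. a i * w + b i * w_dual) \<in> vecs n" using v(3) by (simp add: vecs_def)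
  ultimately show "v \<in> symp_embed ` vecs n" by blast
qed (auto simp: svecs_def vecs_def symp_embed_def Fq_def coords_in_Fq)

lemma symp_symp_embed: "symp n (symp_embed x) (symp_embed y) = \<theta> * (herm q n x y - herm q n x y ^ q)"
  unfolding symp_def symp_embed_def by (simp add: sum_symp_form flip: symp_form_coords)

lemma sweight_symp_embed: "sweight n (symp_embed x) = hweight n x"
proof -
  have "{i. i < n \<and> (coord1 (x i) \<noteq> 0 \<or> coord2 (x i) \<noteq> 0)} = {i. i < n \<and> x i \<noteq> 0}"
    using coords_eq_0_iff by blast
  thus ?thesis unfolding sweight_def hweight_def symp_embed_def by simp
qed

lemma ssubspace_symp_embed:
  assumes D: "linear_code n D"
  shows "ssubspace Fq n (symp_embed ` D)"
  unfolding ssubspace_def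
proof (intro conjI ballI)
  show "symp_embed ` D \<subseteq> svecs Fq n"
    using linear_code_subset_vecs[OF D] svecs_eq_image_symp_embed by blast
  show "((\<lambda>_. 0), (\<lambda>_. 0)) \<in> symp_embed ` D"
    using linear_code_zero[OF D] symp_embed_eq_0_iff by force
next
  fix v v' assume "v \<in> symp_embed ` D" "v' \<in> symp_embed ` D"
  then obtain x y where "x \<in> D" "y \<in> D" "v = symp_embed x" "v' = symp_embed y" by blast
  thus "((\<lambda>i. fst v i + fst v' i), (\<lambda>i. snd v i + snd v' i)) \<in> symp_embed ` D"
    using linear_code_add[OF D]
    by (auto simp: symp_embed_def coord1_add coord2_add intro!: image_eqI[where x = "\<lambda>i. x i + y i"])
next
  fix a v assume "a \<in> Fq" "v \<in> symp_embed ` D"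
  then obtain x where "x \<in> D" "v = symp_embed x" by blast
  thus "((\<lambda>i. a * fst v i), (\<lambda>i. a * snd v i)) \<in> symp_embed ` D"
    using linear_code_smult[OF D] \<open>a \<in> Fq\<close>
    by (auto simp: symp_embed_def Fq_def coord1_smult coord2_smult intro!: image_eqI[where x = "\<lambda>i. a * x i"])
qed

text \<open>\<open>symp\<close> only sees the trace-like part \<open>h - h\<^sup>q\<close> of the Hermitian product \<open>h\<close>; it detects
  \<open>h \<noteq> 0\<close> after rescaling \<open>y\<close> so that \<open>h\<close> becomes \<open>w \<notin> Fq\<close>.\<close>

lemma symp_dual_symp_embed:
  assumes D: "linear_code n D"
  shows "symp_dual Fq n (symp_embed ` D) = symp_embed ` herm_dual q n D"
proof -
  have iff: "(\<forall>y\<in>D. symp n (symp_embed x) (symp_embed y) = 0) \<longleftrightarrow> (\<forall>y\<in>D. herm q n x y = 0)" for x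
  proof
    assume orth: "\<forall>y\<in>D. symp n (symp_embed x) (symp_embed y) = 0"
    show "\<forall>y\<in>D. herm q n x y = 0"
    proof (rule ballI, rule ccontr)
      fix y assume "y \<in> D" "herm q n x y \<noteq> 0"
      hence "herm q n x (\<lambda>i. (w / herm q n x y) ^ q * y i) = w"
        by (simp add: herm_smult_right)
      moreover have "(\<lambda>i. (w / herm q n x y) ^ q * y i) \<in> D" using linear_code_smult[OF D \<open>y \<in> D\<close>] .
      ultimately have "\<theta> * (w - w ^ q) = 0" using orth symp_symp_embed by metis
      thus False using \<theta>_nonzero w_notin_Fq by simp
    qed
  qed (simp add: symp_symp_embed)
  have "symp_dual Fq n (symp_embed ` D)
      = symp_embed ` {x \<in> vecs n. \<forall>y\<in>D. symp n (symp_embed x) (symp_embed y) = 0}"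
    unfolding symp_dual_def svecs_eq_image_symp_embed by blast
  thus ?thesis unfolding herm_dual_def iff .
qed

lemma quenta_code_symp_embed:
  fixes C :: "(nat \<Rightarrow> 'a) set"
  assumes C: "linear_code n C" and params: "code_params n k d C"
    and I: "card (C \<inter> herm_dual q n C) = card (UNIV :: 'a set) ^ I"
  shows "quenta_code Fq n (k - I) d (n - k - I)"
proof -
  let ?D = "herm_dual q n C"
  let ?S = "symp_embed ` ?D"
  have k: "card C = card (UNIV :: 'a set) ^ k" using params unfolding code_params_def by simp
  note dims = herm_dual_dimensions[OF C k I]
  have dual: "symp_dual Fq n ?S = symp_embed ` C"
    using symp_dual_symp_embed[OF linear_code_herm_dual] herm_dual_herm_dual[OF C] by simp
  have "card ?S = card Fq ^ (n - (k - I) + (n - k - I))"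
    using dims card_field card_image[OF inj_on_subset[OF inj_symp_embed]]
    by (simp add: card_Fq power_mult[symmetric] mult_2)
  moreover have "card (?S \<inter> symp_dual Fq n ?S) = card Fq ^ (n - (k - I) - (n - k - I))"
    using dims I card_field card_image[OF inj_on_subset[OF inj_symp_embed]]
    by (simp add: dual card_Fq Int_commute power_mult[symmetric] mult_2 flip: image_Int[OF inj_symp_embed])
  moreover have "\<exists>v\<in>symp_dual Fq n ?S. v \<noteq> ((\<lambda>_. 0), (\<lambda>_. 0)) \<and> sweight n v = d"
    using params unfolding dual code_params_def by (auto simp: symp_embed_eq_0_iff sweight_symp_embed)
  moreover have "\<forall>v\<in>symp_dual Fq n ?S. v \<noteq> ((\<lambda>_. 0), (\<lambda>_. 0)) \<longrightarrow> d \<le> sweight n v"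
    using params unfolding dual code_params_def by (auto simp: symp_embed_eq_0_iff sweight_symp_embed)
  ultimately show ?thesis
    unfolding quenta_code_def using dims ssubspace_symp_embed[OF linear_code_herm_dual]
    by (intro conjI exI[of _ ?S]) auto
qed

end

theorem mainTheorem7:
  fixes q n k d :: nat
    and C :: "(nat \<Rightarrow> 'a::{field,finite}) set"
    and emb :: "'a \<Rightarrow> 'b::field"
    and \<alpha> :: 'b
  assumes "prime_power q"
    and "card (UNIV :: 'a set) = q ^ 2"
    and "0 < n"
    and "coprime n q"
    and "cyclic_code n C"
    and "code_params n k d C"
    and "field_embedding emb"
    and "primitive_root_of_unity n \<alpha>"
  shows "quenta_code {x::'a. x ^ q = x} n
           (k - card (defining_set emb \<alpha> n (herm_dual q n C) \<inter> defining_set emb \<alpha> n C))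
           d
           (n - k - card (defining_set emb \<alpha> n (herm_dual q n C) \<inter> defining_set emb \<alpha> n C))"
proof -
  interpret hermitian_field q "TYPE('a)" using assms(1,2) by unfold_locales
  obtain \<theta> w :: 'a where "\<theta> \<noteq> 0" "\<theta> ^ q = - \<theta>" "w ^ q \<noteq> w"
    using exists_antifixed exists_not_in_Fq by blast
  then interpret hermitian_coordinates q "TYPE('a)" \<theta> w by unfold_locales
  show ?thesis
    using quenta_code_symp_embed[OF cyclic_code_linear[OF assms(5)] assms(6)
        card_Int_herm_dual[OF assms(3,5,7,8)]]
    unfolding Fq_def .
qed

end
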